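(* Let $P\subseteq\mathbb{R}^7$ be an associative $3$-plane. Then $\Theta(P) = \Lambda^2(P)\oplus(P\lrcorner\varphi)$, i.e. $\Theta(P) = \Lambda^2(P) + (P\lrcorner\varphi)$ and $\Lambda^2(P)\cap(P\lrcorner\varphi) = \{0\}$; this direct sum is not orthogonal.
   Context: Equip $\mathbb{R}^7$ with its standard inner product, orientation and basis $e_1,\dots,e_7$. Let $\varphi = e_{123} - e_{167} - e_{527} - e_{563} - e_{415} - e_{426} - e_{437}$ ($e_{ijk} = e_i\wedge e_j\wedge e_k$), $\psi = \star\varphi = e_{4567} - e_{4523} - e_{4163} - e_{4127} - e_{2637} - e_{1537} - e_{1526}$, and define $\times$ by $\langle u \times v, w \rangle = \varphi(u,v,w)$. A $3$-dimensional subspace is associative if closed under $\times$. For $u,v$: $u\wedge v$ is the 2-form $(a,b)\mapsto \langle u,a\rangle\langle v,b\rangle - \langle u,b\rangle\langle v,a\rangle$; $u\lrcorner\varphi$ is the 2-form $(a,b)\mapsto \varphi(u,a,b)$; $\Psi_{uv}$ is the 2-form $(a,b)\mapsto\psi(u,v,a,b)$. $P\lrcorner\varphi = \{u\lrcorner\varphi : u\in P\}$, $\Lambda^2(P) = \mathrm{Span}\{u\wedge v: u,v\in P\}$, $\Psi(P) = \mathrm{Span}\{\Psi_{uv} : u,v\in P\}$, and $\Theta(P) = \Lambda^2(P)\oplus\Psi(P)$. The inner product on $\Lambda^2$ is $\langle X,Y\rangle = \sum_{i,j}X(e_i,e_j)Y(e_i,e_j)$. *)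

theory Defs
  imports "HOL-Analysis.Analysis"
begin

text \<open>Vectors of R^7 are elements of real^7. The basis vector e_n (n = 1..7) is
  axis (n::7) 1; in the numeral type 7 the indices 1,...,6,7 are the seven distinct
  elements (7 = 0 in this type). k-forms are multilinear maps real^7 => ... => real.\<close>

definition ebasis :: "7 \<Rightarrow> real^7" where
  "ebasis i = axis i 1"

definition elem_form :: "7 list \<Rightarrow> (real^7) list \<Rightarrow> real" where
  "elem_form idx vs =
     (\<Sum>p | p permutes {..<length idx}.
        of_int (sign p) * (\<Prod>l<length idx. (vs ! (p l)) $ (idx ! l)))"

definition phi :: "real^7 \<Rightarrow> real^7 \<Rightarrow> real^7 \<Rightarrow> real" where
  "phi a b c =
     elem_form [1,2,3] [a,b,c] - elem_form [1,6,7] [a,b,c] - elem_form [5,2,7] [a,b,c]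
   - elem_form [5,6,3] [a,b,c] - elem_form [4,1,5] [a,b,c] - elem_form [4,2,6] [a,b,c]
   - elem_form [4,3,7] [a,b,c]"

definition psi :: "real^7 \<Rightarrow> real^7 \<Rightarrow> real^7 \<Rightarrow> real^7 \<Rightarrow> real" where
  "psi a b c d =
     elem_form [4,5,6,7] [a,b,c,d] - elem_form [4,5,2,3] [a,b,c,d]
   - elem_form [4,1,6,3] [a,b,c,d] - elem_form [4,1,2,7] [a,b,c,d]
   - elem_form [2,6,3,7] [a,b,c,d] - elem_form [1,5,3,7] [a,b,c,d]
   - elem_form [1,5,2,6] [a,b,c,d]"

text \<open>Cross product: the unique vector with <u x v, w> = phi(u,v,w), i.e. its i-th
  component is phi(u,v,e_i).\<close>
definition cross7 :: "real^7 \<Rightarrow> real^7 \<Rightarrow> real^7" where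
  "cross7 u v = (\<chi> i. phi u v (ebasis i))"

definition associative :: "(real^7) set \<Rightarrow> bool" where
  "associative P \<longleftrightarrow> subspace P \<and> dim P = 3 \<and> (\<forall>u\<in>P. \<forall>v\<in>P. cross7 u v \<in> P)"

text \<open>A (bilinear) 2-form is represented by its component matrix X(e_i,e_j); with this
  representation the inner product X \<bullet> Y on real^7^7 is exactly
  sum_{i,j} X(e_i,e_j) Y(e_i,e_j).\<close>
definition form2 :: "(real^7 \<Rightarrow> real^7 \<Rightarrow> real) \<Rightarrow> real^7^7" where
  "form2 B = (\<chi> i j. B (ebasis i) (ebasis j))"

definition wedge2 :: "real^7 \<Rightarrow> real^7 \<Rightarrow> real^7^7" where
  "wedge2 u v = form2 (\<lambda>a b. inner u a * inner v b - inner u b * inner v a)"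

definition contr_phi :: "real^7 \<Rightarrow> real^7^7" where
  "contr_phi u = form2 (\<lambda>a b. phi u a b)"

definition Psi2 :: "real^7 \<Rightarrow> real^7 \<Rightarrow> real^7^7" where
  "Psi2 u v = form2 (\<lambda>a b. psi u v a b)"

definition contr_phi_set :: "(real^7) set \<Rightarrow> (real^7^7) set" where
  "contr_phi_set P = contr_phi ` P"

definition Lambda2 :: "(real^7) set \<Rightarrow> (real^7^7) set" where
  "Lambda2 P = span {wedge2 u v | u v. u \<in> P \<and> v \<in> P}"

definition PsiP :: "(real^7) set \<Rightarrow> (real^7^7) set" where
  "PsiP P = span {Psi2 u v | u v. u \<in> P \<and> v \<in> P}"

definition Theta :: "(real^7) set \<Rightarrow> (real^7^7) set" where
  "Theta P = {X + Y | X Y. X \<in> Lambda2 P \<and> Y \<in> PsiP P}"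

end

theory Submission
  imports Defs
begin

(* Everything rests on the identity Psi_uv = u /\ v - (u x v) _| phi.
   Since P is closed under x, it puts Psi(P) inside Lambda^2(P) + P _| phi. Conversely,
   for w in P pick v in P nonzero and orthogonal to w; then w = v x (w x v) / |v|^2
   with w x v in P, so w _| phi lies in Lambda^2(P) + Psi(P).
   Both remaining claims come from the pairing <u /\ v, w _| phi> = 2 phi(w,u,v).
   If a is a nonzero vector orthogonal to P, every element of Lambda^2(P) is orthogonal
   to a /\ (w x a), while w _| phi pairs with it to 2 |w x a|^2, which vanishes only
   for w = 0. For orthogonal nonzero u, v in P the pairing of u /\ v with
   (u x v) _| phi is 2 |u x v|^2 > 0. *)

lemma sum_permutes_insert_sign:
  fixes g :: "(nat \<Rightarrow> nat) \<Rightarrow> 'a::comm_ring_1"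
  assumes "finite S" "a \<notin> S"
  shows "(\<Sum>p | p permutes insert a S. of_int (sign p) * g p) =
    (\<Sum>b\<in>insert a S. (if a = b then 1 else -1) *
       (\<Sum>q | q permutes S. of_int (sign q) * g (Transposition.transpose a b \<circ> q)))"
proof -
  have sign_swap: "of_int (sign (Transposition.transpose a b \<circ> q)) =
      (if a = b then 1 else -1) * (of_int (sign q) :: 'a)" if "q permutes S" for b q
    using that assms(1)
    by (simp add: sign_compose permutation_swap_id permutes_imp_permutation sign_swap_id)
  show ?thesis
    unfolding sum_over_permutations_insert[OF assms] sum_distrib_left
    by (intro sum.cong refl) (simp add: sign_swap)
qed

lemma elem_form_3:
  "elem_form [i, j, k] [a, b, c] =
     a$i * (b$j * c$k - b$k * c$j) - a$j * (b$i * c$k - b$k * c$i) + a$k * (b$i * c$j - b$j * c$i)"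
  unfolding elem_form_def
  by (simp add: numeral_3_eq_3 lessThan_Suc sum_permutes_insert_sign algebra_simps)

lemma elem_form_4:
  "elem_form [i, j, k, l] [a, b, c, d] =
     a$i * elem_form [j, k, l] [b, c, d] - b$i * elem_form [j, k, l] [a, c, d]
   + c$i * elem_form [j, k, l] [a, b, d] - d$i * elem_form [j, k, l] [a, b, c]"
  unfolding elem_form_3 unfolding elem_form_def
  by (simp add: numeral_3_eq_3 lessThan_Suc sum_permutes_insert_sign algebra_simps)

lemma exhaust_7:
  fixes x :: 7
  shows "x = 1 \<or> x = 2 \<or> x = 3 \<or> x = 4 \<or> x = 5 \<or> x = 6 \<or> x = 7"
proof (induct x)
  case (of_int z)
  then have "z = 0 \<or> z = 1 \<or> z = 2 \<or> z = 3 \<or> z = 4 \<or> z = 5 \<or> z = 6" by fastforce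
  then show ?case by auto
qed

lemma forall_7: "(\<forall>i::7. P i) \<longleftrightarrow> P 1 \<and> P 2 \<and> P 3 \<and> P 4 \<and> P 5 \<and> P 6 \<and> P 7"
  by (metis exhaust_7)

lemma UNIV_7: "UNIV = {1, 2, 3, 4, 5, 6, 7::7}"
  using exhaust_7 by auto

lemma sum_UNIV_7:
  fixes f :: "7 \<Rightarrow> 'a::comm_monoid_add"
  shows "(\<Sum>i\<in>UNIV. f i) = f 1 + f 2 + f 3 + f 4 + f 5 + f 6 + f 7"
  unfolding UNIV_7 by (simp add: add.assoc)

lemma ebasis_nth [simp]: "ebasis i $ j = (if j = i then 1 else 0)"
  by (simp add: ebasis_def axis_def)

lemma inner_ebasis [simp]: "inner x (ebasis i) = x $ i"
  by (simp add: ebasis_def inner_axis)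

lemma inner_vec_7:
  "inner (x :: real^7) y = x$1 * y$1 + x$2 * y$2 + x$3 * y$3 + x$4 * y$4 + x$5 * y$5 + x$6 * y$6 + x$7 * y$7"
  by (simp add: inner_vec_def sum_UNIV_7)

lemma cross7_nth:
  "cross7 a b $ 1 =   a$2 * b$3 - a$3 * b$2 - a$6 * b$7 + a$7 * b$6 + a$4 * b$5 - a$5 * b$4"
  "cross7 a b $ 2 = - a$1 * b$3 + a$3 * b$1 + a$5 * b$7 - a$7 * b$5 + a$4 * b$6 - a$6 * b$4"
  "cross7 a b $ 3 =   a$1 * b$2 - a$2 * b$1 - a$5 * b$6 + a$6 * b$5 + a$4 * b$7 - a$7 * b$4"
  "cross7 a b $ 4 = - a$1 * b$5 + a$5 * b$1 - a$2 * b$6 + a$6 * b$2 - a$3 * b$7 + a$7 * b$3"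
  "cross7 a b $ 5 = - a$2 * b$7 + a$7 * b$2 - a$6 * b$3 + a$3 * b$6 - a$4 * b$1 + a$1 * b$4"
  "cross7 a b $ 6 =   a$1 * b$7 - a$7 * b$1 + a$5 * b$3 - a$3 * b$5 - a$4 * b$2 + a$2 * b$4"
  "cross7 a b $ 7 = - a$1 * b$6 + a$6 * b$1 - a$5 * b$2 + a$2 * b$5 - a$4 * b$3 + a$3 * b$4"
  by (simp_all add: cross7_def phi_def elem_form_3)

lemma phi_eq_inner_cross7: "phi u v w = inner (cross7 u v) w"
  unfolding phi_def elem_form_3 inner_vec_7 cross7_nth by (simp add: algebra_simps)

lemma phi_cyclic: "phi a b c = phi b c a"
  unfolding phi_def elem_form_3 by (simp add: algebra_simps)

lemma linear_cross7_left: "linear (\<lambda>u. cross7 u v)"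
  by (rule linearI) (simp_all add: vec_eq_iff forall_7 cross7_nth algebra_simps)

lemma cross7_cross7: "cross7 u (cross7 v u) = inner u u *\<^sub>R v - inner u v *\<^sub>R u"
  by (simp add: vec_eq_iff forall_7 cross7_nth inner_vec_7 algebra_simps)

lemma inner_cross7_cross7:
  "inner (cross7 u v) (cross7 u v) = inner u u * inner v v - (inner u v)\<^sup>2"
  unfolding inner_vec_7 cross7_nth by (simp add: algebra_simps power2_eq_square)

lemma psi_eq_wedge_minus_phi_cross7:
  "psi u v a b = (inner u a * inner v b - inner u b * inner v a) - phi (cross7 u v) a b"
  unfolding psi_def elem_form_4 elem_form_3 phi_eq_inner_cross7 inner_vec_7 cross7_nth
  by (simp add: algebra_simps)

lemma form2_nth [simp]: "form2 B $ i $ j = B (ebasis i) (ebasis j)"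
  by (simp add: form2_def)

lemma Psi2_eq: "Psi2 u v = wedge2 u v - contr_phi (cross7 u v)"
  by (simp add: vec_eq_iff Psi2_def wedge2_def contr_phi_def psi_eq_wedge_minus_phi_cross7)

lemma linear_contr_phi: "linear contr_phi"
proof (rule linearI)
  show "contr_phi (x + y) = contr_phi x + contr_phi y" for x y
    by (simp add: vec_eq_iff contr_phi_def phi_eq_inner_cross7 linear_add[OF linear_cross7_left] inner_add_left)
  show "contr_phi (c *\<^sub>R x) = c *\<^sub>R contr_phi x" for c x
    by (simp add: vec_eq_iff contr_phi_def phi_eq_inner_cross7 linear_scale[OF linear_cross7_left])
qed

lemma inner_wedge2_wedge2:
  "inner (wedge2 u v) (wedge2 a b) = 2 * (inner u a * inner v b - inner u b * inner v a)"
  unfolding inner_vec_def sum_UNIV_7 wedge2_def form2_nth inner_ebasis inner_vec_7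
  by (simp add: algebra_simps)

lemma inner_wedge2_contr_phi: "inner (wedge2 u v) (contr_phi w) = 2 * phi w u v"
  unfolding inner_vec_def sum_UNIV_7 wedge2_def contr_phi_def form2_nth inner_ebasis
    phi_eq_inner_cross7 inner_vec_7 cross7_nth
  by (simp add: algebra_simps)

lemma orthogonal_vector_in_subspace_exists:
  fixes P :: "'a::euclidean_space set"
  assumes "subspace P" "2 \<le> dim P" "w \<in> P"
  obtains v where "v \<in> P" "v \<noteq> 0" "inner v w = 0"
proof -
  have "dim (span {w}) \<le> 1"
    using dim_le_card[of "{w}" "{w}"] by (simp add: span_superset)
  moreover have "span {w} \<subseteq> span P"
    using assms(3) by (simp add: span_mono)
  ultimately have "span {w} \<subset> span P"
    using assms(2) dim_span[of P] by fastforce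
  then obtain x where "x \<noteq> 0" "x \<in> span P" "\<And>y. y \<in> span {w} \<Longrightarrow> orthogonal x y"
    using orthogonal_to_subspace_exists_gen by blast
  moreover have "x \<bullet> w = 0"
    using calculation(3)[of w] by (simp add: orthogonal_def span_base)
  moreover have "span P = P"
    using assms(1) by (simp add: span_eq_iff)
  ultimately show ?thesis
    using that by simp
qed

lemma sums_subset_sums_subspace:
  assumes "subspace A" "subspace B" "C \<subseteq> {x + y | x y. x \<in> A \<and> y \<in> B}"
  shows "{x + y | x y. x \<in> A \<and> y \<in> C} \<subseteq> {x + y | x y. x \<in> A \<and> y \<in> B}"
proof clarify
  fix a c assume "a \<in> A" "c \<in> C"
  then obtain a' b where "a' \<in> A" "b \<in> B" "c = a' + b"
    using assms(3) by blast
  then have "a + c = (a + a') + b" "a + a' \<in> A"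
    using \<open>a \<in> A\<close> assms(1) by (simp_all add: add.assoc subspace_add)
  then show "\<exists>x y. a + c = x + y \<and> x \<in> A \<and> y \<in> B"
    using \<open>b \<in> B\<close> by blast
qed

lemma subspace_Lambda2: "subspace (Lambda2 P)"
  unfolding Lambda2_def by (rule subspace_span)

lemma subspace_PsiP: "subspace (PsiP P)"
  unfolding PsiP_def by (rule subspace_span)

lemma wedge2_in_Lambda2: "u \<in> P \<Longrightarrow> v \<in> P \<Longrightarrow> wedge2 u v \<in> Lambda2 P"
  unfolding Lambda2_def by (intro span_base) blast

lemma Psi2_in_PsiP: "u \<in> P \<Longrightarrow> v \<in> P \<Longrightarrow> Psi2 u v \<in> PsiP P"
  unfolding PsiP_def by (intro span_base) blast

lemma subspace_contr_phi_set: "subspace P \<Longrightarrow> subspace (contr_phi_set P)"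
  unfolding contr_phi_set_def by (rule linear_subspace_image[OF linear_contr_phi])

lemma PsiP_subset_Lambda2_plus_contr_phi_set:
  assumes "subspace P" and cross_closed: "\<And>u v. u \<in> P \<Longrightarrow> v \<in> P \<Longrightarrow> cross7 u v \<in> P"
  shows "PsiP P \<subseteq> {X + Y | X Y. X \<in> Lambda2 P \<and> Y \<in> contr_phi_set P}"
  unfolding PsiP_def
proof (intro span_minimal subspace_sums subspace_Lambda2 subspace_contr_phi_set assms(1) subsetI)
  fix Z assume "Z \<in> {Psi2 u v | u v. u \<in> P \<and> v \<in> P}"
  then obtain u v where uv: "u \<in> P" "v \<in> P" and Z: "Z = Psi2 u v"
    by blast
  have "Z = wedge2 u v + contr_phi (- cross7 u v)"
    unfolding Z Psi2_eq linear_neg[OF linear_contr_phi] by simp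
  moreover have "- cross7 u v \<in> P"
    using assms(1) cross_closed[OF uv] by (rule subspace_neg)
  ultimately show "Z \<in> {X + Y | X Y. X \<in> Lambda2 P \<and> Y \<in> contr_phi_set P}"
    using wedge2_in_Lambda2[OF uv] unfolding contr_phi_set_def by blast
qed

lemma contr_phi_set_subset_Theta:
  assumes "subspace P" "2 \<le> dim P"
    and cross_closed: "\<And>u v. u \<in> P \<Longrightarrow> v \<in> P \<Longrightarrow> cross7 u v \<in> P"
  shows "contr_phi_set P \<subseteq> Theta P"
proof
  fix Y assume "Y \<in> contr_phi_set P"
  then obtain w where "w \<in> P" and Y: "Y = contr_phi w"
    unfolding contr_phi_set_def by blast
  then obtain v where v: "v \<in> P" "v \<noteq> 0" "inner v w = 0"
    using orthogonal_vector_in_subspace_exists assms(1,2) by blast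
  define x where "x = cross7 w v"
  have "x \<in> P"
    unfolding x_def using cross_closed \<open>w \<in> P\<close> v(1) .
  have "cross7 v x = inner v v *\<^sub>R w"
    unfolding x_def cross7_cross7 using v(3) by simp
  then have "w = (1 / inner v v) *\<^sub>R cross7 v x"
    using v(2) by simp
  then have "Y = (1 / inner v v) *\<^sub>R wedge2 v x + (- (1 / inner v v)) *\<^sub>R Psi2 v x"
    unfolding Y Psi2_eq by (simp add: linear_scale[OF linear_contr_phi] algebra_simps)
  moreover have "(1 / inner v v) *\<^sub>R wedge2 v x \<in> Lambda2 P"
    using subspace_Lambda2 wedge2_in_Lambda2[OF v(1) \<open>x \<in> P\<close>] by (rule subspace_scale)
  moreover have "(- (1 / inner v v)) *\<^sub>R Psi2 v x \<in> PsiP P"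
    using subspace_PsiP Psi2_in_PsiP[OF v(1) \<open>x \<in> P\<close>] by (rule subspace_scale)
  ultimately show "Y \<in> Theta P"
    unfolding Theta_def by blast
qed

lemma Theta_eq_Lambda2_plus_contr_phi_set:
  assumes "subspace P" "2 \<le> dim P"
    and "\<And>u v. u \<in> P \<Longrightarrow> v \<in> P \<Longrightarrow> cross7 u v \<in> P"
  shows "Theta P = {X + Y | X Y. X \<in> Lambda2 P \<and> Y \<in> contr_phi_set P}"
proof
  show "Theta P \<subseteq> {X + Y | X Y. X \<in> Lambda2 P \<and> Y \<in> contr_phi_set P}"
    unfolding Theta_def
    using subspace_Lambda2 subspace_contr_phi_set[OF assms(1)]
      PsiP_subset_Lambda2_plus_contr_phi_set[OF assms(1,3)]
    by (rule sums_subset_sums_subspace)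
  show "{X + Y | X Y. X \<in> Lambda2 P \<and> Y \<in> contr_phi_set P} \<subseteq> Theta P"
    unfolding Theta_def
    using subspace_Lambda2 subspace_PsiP contr_phi_set_subset_Theta[OF assms, unfolded Theta_def]
    by (rule sums_subset_sums_subspace)
qed

lemma Lambda2_inter_contr_phi_set:
  assumes "subspace P" "dim P < 7"
  shows "Lambda2 P \<inter> contr_phi_set P = {0}"
proof -
  obtain a where "a \<noteq> 0" and a_perp: "\<And>y. y \<in> span P \<Longrightarrow> orthogonal a y"
    using orthogonal_to_subspace_exists[of P] assms(2) by auto
  have "w = 0" if "w \<in> P" "contr_phi w \<in> Lambda2 P" for w
  proof (rule ccontr)
    assume "w \<noteq> 0"
    define b where "b = cross7 w a"
    have "orthogonal (wedge2 a b) (contr_phi w)"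
      using that(2) unfolding Lambda2_def
    proof (rule orthogonal_to_span)
      fix Z assume "Z \<in> {wedge2 u v | u v. u \<in> P \<and> v \<in> P}"
      then obtain u v where "u \<in> P" "v \<in> P" "Z = wedge2 u v"
        by blast
      then show "orthogonal (wedge2 a b) Z"
        using a_perp[of u] a_perp[of v]
        by (simp add: orthogonal_def inner_wedge2_wedge2 span_base inner_commute)
    qed
    moreover have "inner a w = 0"
      using a_perp[of w] \<open>w \<in> P\<close> by (simp add: orthogonal_def span_base)
    then have "b \<noteq> 0"
      unfolding b_def using \<open>w \<noteq> 0\<close> \<open>a \<noteq> 0\<close> inner_cross7_cross7[of w a]
      by (auto simp: inner_commute)
    moreover have "inner (wedge2 a b) (contr_phi w) = 2 * inner b b"
      by (simp add: inner_wedge2_contr_phi phi_eq_inner_cross7 b_def)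
    ultimately show False
      by (simp add: orthogonal_def)
  qed
  moreover have "0 \<in> Lambda2 P" "0 \<in> contr_phi_set P"
    using subspace_0 subspace_Lambda2 subspace_contr_phi_set[OF assms(1)] by blast+
  ultimately show ?thesis
    unfolding contr_phi_set_def using linear_0[OF linear_contr_phi] by auto
qed

lemma Lambda2_not_orthogonal_contr_phi_set:
  assumes "subspace P" "2 \<le> dim P"
    and cross_closed: "\<And>u v. u \<in> P \<Longrightarrow> v \<in> P \<Longrightarrow> cross7 u v \<in> P"
  shows "\<not> (\<forall>X\<in>Lambda2 P. \<forall>Y\<in>contr_phi_set P. X \<bullet> Y = 0)"
proof -
  obtain u where "u \<in> P" "u \<noteq> 0"
    using assms(2) dim_eq_0[of P] by fastforce
  moreover obtain v where "v \<in> P" "v \<noteq> 0" "inner v u = 0"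
    using orthogonal_vector_in_subspace_exists assms(1,2) \<open>u \<in> P\<close> by blast
  ultimately have "cross7 u v \<noteq> 0"
    using inner_cross7_cross7[of u v] by (auto simp: inner_commute)
  moreover have "inner (wedge2 u v) (contr_phi (cross7 u v)) = 2 * inner (cross7 u v) (cross7 u v)"
    unfolding inner_wedge2_contr_phi phi_cyclic[of "cross7 u v"] by (simp add: phi_eq_inner_cross7)
  ultimately show ?thesis
    using wedge2_in_Lambda2[OF \<open>u \<in> P\<close> \<open>v \<in> P\<close>] cross_closed[OF \<open>u \<in> P\<close> \<open>v \<in> P\<close>]
    unfolding contr_phi_set_def by fastforce
qed

theorem corollary4p11:
  fixes P :: "(real^7) set"
  assumes "associative P"
  shows "Theta P = {X + Y | X Y. X \<in> Lambda2 P \<and> Y \<in> contr_phi_set P}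
     \<and> Lambda2 P \<inter> contr_phi_set P = {0}
     \<and> \<not> (\<forall>X\<in>Lambda2 P. \<forall>Y\<in>contr_phi_set P. X \<bullet> Y = 0)"
proof -
  have P: "subspace P" "dim P = 3" "\<And>u v. u \<in> P \<Longrightarrow> v \<in> P \<Longrightarrow> cross7 u v \<in> P"
    using assms unfolding associative_def by auto
  then have "2 \<le> dim P" "dim P < 7"
    by simp_all
  with P show ?thesis
    using Theta_eq_Lambda2_plus_contr_phi_set Lambda2_inter_contr_phi_set
      Lambda2_not_orthogonal_contr_phi_set by blast
qed

end
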